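(* Let $f\in\mathcal{K}$ have radius of convergence $R>0$, Khinchin family $(X_t)$ and fulcrum $F$. For every integer $n\ge3$, $$\limsup_{s\uparrow\ln R}\frac{|F^{(j)}(s)|}{F''(s)^{j/2}}<+\infty\quad\text{for every }3\le j\le n$$ if and only if $$\limsup_{t\uparrow R}|\mathbf{E}(\breve{X}_t^k)|<+\infty\quad\text{for every }3\le k\le n.$$
   Context: The class $\mathcal{K}$ consists of non-constant power series $f(z)=\sum_{n\ge0}a_nz^n$ with radius of convergence $R\in(0,+\infty]$, with $a_n\ge 0$ for all $n$ and $a_0>0$. For $t\in(0,R)$, $X_t$ is the random variable with $\mathbf{P}(X_t=n)=a_nt^n/f(t)$, $n\ge0$. Write $m_f(t)=\mathbf{E}(X_t)$, $\sigma_f^2(t)=\mathbf{V}(X_t)>0$ and $\breve{X}_t=(X_t-m_f(t))/\sigma_f(t)$. The fulcrum of $f$ is $F(s)=\ln f(e^s)$ for real $s<\ln R$ (with $\ln R=+\infty$ if $R=+\infty$); $F''(s)=\sigma_f^2(e^s)$. *)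

theory Defs
  imports "HOL-Analysis.Analysis"
begin

text \<open>A power series f(z) = sum a_n z^n is represented by its coefficient sequence a.\<close>

definition inK :: "(nat \<Rightarrow> real) \<Rightarrow> bool" where
  "inK a \<longleftrightarrow> (\<forall>n. a n \<ge> 0) \<and> a 0 > 0 \<and> (\<exists>n>0. a n \<noteq> 0) \<and> conv_radius a > 0"

definition pfun :: "(nat \<Rightarrow> real) \<Rightarrow> real \<Rightarrow> real" where
  "pfun a t = (\<Sum>n. a n * t ^ n)"

text \<open>Khinchin family: P(X_t = n) = a_n t^n / f(t).\<close>
definition kprob :: "(nat \<Rightarrow> real) \<Rightarrow> real \<Rightarrow> nat \<Rightarrow> real" where
  "kprob a t n = a n * t ^ n / pfun a t"

definition kexp :: "(nat \<Rightarrow> real) \<Rightarrow> real \<Rightarrow> (nat \<Rightarrow> real) \<Rightarrow> real" where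
  "kexp a t g = (\<Sum>n. g n * kprob a t n)"

definition kmean :: "(nat \<Rightarrow> real) \<Rightarrow> real \<Rightarrow> real" where
  "kmean a t = kexp a t (\<lambda>n. real n)"

definition kvar :: "(nat \<Rightarrow> real) \<Rightarrow> real \<Rightarrow> real" where
  "kvar a t = kexp a t (\<lambda>n. (real n - kmean a t) ^ 2)"

definition ksigma :: "(nat \<Rightarrow> real) \<Rightarrow> real \<Rightarrow> real" where
  "ksigma a t = sqrt (kvar a t)"

definition knormmoment :: "(nat \<Rightarrow> real) \<Rightarrow> nat \<Rightarrow> real \<Rightarrow> real" where
  "knormmoment a k t = kexp a t (\<lambda>n. ((real n - kmean a t) / ksigma a t) ^ k)"

definition fulcrum :: "(nat \<Rightarrow> real) \<Rightarrow> real \<Rightarrow> real" where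
  "fulcrum a s = ln (pfun a (exp s))"

definition to_R :: "(nat \<Rightarrow> real) \<Rightarrow> real filter" where
  "to_R a = (if conv_radius a = \<infinity> then at_top else at_left (real_of_ereal (conv_radius a)))"

definition to_lnR :: "(nat \<Rightarrow> real) \<Rightarrow> real filter" where
  "to_lnR a = (if conv_radius a = \<infinity> then at_top else at_left (ln (real_of_ereal (conv_radius a))))"

end

theory Submission
  imports Defs
begin

(*
  For t = exp s the derivatives of the fulcrum are the cumulants of X_t.  To see this, let
  M_k(s) = sum_n a_n (n - m)^k exp (s (n - m)); then M_k' = M_(k+1) and M_1 = M_0 (F' - m).
  Differentiating the latter identity k times by Leibniz' rule and taking m = F'(s) = E X_t
  gives the moment-cumulant recursion
    mu_(k+1) = sum_(i<k) (k choose i) mu_i F^(k+1-i)(s)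
  for the central moments mu_k of X_t.  Dividing by sigma^(k+1), sigma^2 = F''(s), the same
  recursion links the standardized moments E(breve X_t^k) with F^(j)/F''^(j/2), and it starts
  with E(breve X_t^0) = 1 and F''/F'' = 1.  In either direction the recursion is triangular
  with leading coefficient 1, so by induction the standardized moments of orders 3..n are
  bounded iff the quotients of orders 3..n are.  Finally t = exp s maps s -> ln R onto t -> R.
*)

section \<open>Successive derivatives\<close>

definition successive_derivs :: "nat \<Rightarrow> (nat \<Rightarrow> real \<Rightarrow> real) \<Rightarrow> real set \<Rightarrow> bool" where
  "successive_derivs N u S \<longleftrightarrow> (\<forall>k<N. \<forall>x\<in>S. (u k has_real_derivative u (Suc k) x) (at x))"

lemma successive_derivs_Suc_shift:
  "successive_derivs (Suc N) u S \<Longrightarrow> successive_derivs N (\<lambda>k. u (Suc k)) S"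
  unfolding successive_derivs_def by auto

lemma successive_derivs_case_nat:
  assumes "successive_derivs N w S" "\<And>x. x \<in> S \<Longrightarrow> (g has_real_derivative w 0 x) (at x)"
  shows "successive_derivs (Suc N) (case_nat g w) S"
  using assms unfolding successive_derivs_def by (auto simp: less_Suc_eq_0_disj)

lemma higher_deriv_eq_successive_derivs:
  assumes "open S" "successive_derivs N u S" "\<And>y. y \<in> S \<Longrightarrow> f y = u 0 y"
  shows "k \<le> N \<Longrightarrow> x \<in> S \<Longrightarrow> (deriv ^^ k) f x = u k x"
proof (induction k arbitrary: x)
  case 0
  then show ?case using assms(3) by simp
next
  case (Suc k)
  have "(u k has_real_derivative u (Suc k) x) (at x)"
    using assms(2) Suc.prems unfolding successive_derivs_def by auto
  then have "((deriv ^^ k) f has_real_derivative u (Suc k) x) (at x)"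
    by (rule has_field_derivative_transform_within_open[OF _ assms(1) Suc.prems(2)])
       (use Suc in auto)
  then show ?case by (simp add: DERIV_imp_deriv)
qed

lemma sum_choose_Suc_Leibniz:
  fixes u v :: "nat \<Rightarrow> real"
  shows "(\<Sum>i\<le>k. real (k choose i) * (u (Suc i) * v (k - i) + u i * v (Suc (k - i))))
       = (\<Sum>i\<le>Suc k. real (Suc k choose i) * u i * v (Suc k - i))"
proof -
  have choose_Suc: "Suc k choose i = (k choose i) + (if i = 0 then 0 else k choose (i - 1))" for i
    by (cases i) simp_all
  have "(\<Sum>i\<le>Suc k. real (Suc k choose i) * u i * v (Suc k - i))
      = (\<Sum>i\<le>Suc k. real (k choose i) * u i * v (Suc k - i))
        + (\<Sum>i\<le>Suc k. real (if i = 0 then 0 else k choose (i - 1)) * u i * v (Suc k - i))"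
    by (simp add: choose_Suc algebra_simps sum.distrib)
  also have "(\<Sum>i\<le>Suc k. real (k choose i) * u i * v (Suc k - i))
           = (\<Sum>i\<le>k. real (k choose i) * u i * v (Suc (k - i)))"
    by (simp add: Suc_diff_le)
  also have "(\<Sum>i\<le>Suc k. real (if i = 0 then 0 else k choose (i - 1)) * u i * v (Suc k - i))
           = (\<Sum>i\<le>k. real (k choose i) * u (Suc i) * v (k - i))"
    by (subst sum.atMost_Suc_shift) simp
  finally show ?thesis by (simp add: algebra_simps sum.distrib)
qed

lemma successive_derivs_mult:
  assumes "successive_derivs N u S" "successive_derivs N v S"
  shows "successive_derivs N (\<lambda>k x. \<Sum>i\<le>k. real (k choose i) * u i x * v (k - i) x) S"
  unfolding successive_derivs_def
proof (intro allI impI ballI)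
  fix k x assume k: "k < N" and x: "x \<in> S"
  have "((\<lambda>x. \<Sum>i\<le>k. real (k choose i) * u i x * v (k - i) x) has_real_derivative
      (\<Sum>i\<le>k. real (k choose i) * (u (Suc i) x * v (k - i) x + u i x * v (Suc (k - i)) x))) (at x)"
  proof (rule DERIV_sum)
    fix i assume "i \<in> {..k}"
    then have "(u i has_real_derivative u (Suc i) x) (at x)"
      and "(v (k - i) has_real_derivative v (Suc (k - i)) x) (at x)"
      using assms k x unfolding successive_derivs_def by auto
    then show "((\<lambda>x. real (k choose i) * u i x * v (k - i) x) has_real_derivative
        real (k choose i) * (u (Suc i) x * v (k - i) x + u i x * v (Suc (k - i)) x)) (at x)"
      by (auto intro!: derivative_eq_intros simp: algebra_simps)
  qed
  then show "((\<lambda>x. \<Sum>i\<le>k. real (k choose i) * u i x * v (k - i) x) has_real_derivative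
      (\<Sum>i\<le>Suc k. real (Suc k choose i) * u i x * v (Suc k - i) x)) (at x)"
    by (simp only: sum_choose_Suc_Leibniz[of k "\<lambda>i. u i x" "\<lambda>i. v i x"])
qed

lemma successive_derivs_minus:
  "successive_derivs N u S \<Longrightarrow> successive_derivs N (\<lambda>k x. - u k x) S"
  unfolding successive_derivs_def by (auto intro: DERIV_minus)

lemma successive_derivs_inverse:
  assumes "\<And>N. successive_derivs N u S" "\<And>x. x \<in> S \<Longrightarrow> u 0 x \<noteq> 0"
  shows "\<exists>v. successive_derivs N v S \<and> (\<forall>x\<in>S. v 0 x = 1 / u 0 x)"
proof (induction N)
  case 0
  show ?case by (rule exI[of _ "\<lambda>_ x. 1 / u 0 x"]) (simp add: successive_derivs_def)
next
  case (Suc N)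
  then obtain v where v: "successive_derivs N v S" "\<forall>x\<in>S. v 0 x = 1 / u 0 x" by blast
  define v2 where "v2 k x = (\<Sum>i\<le>k. real (k choose i) * v i x * v (k - i) x)" for k x
  \<comment> \<open>\<open>(1/u)' = - u' (1/u)\<^sup>2\<close>, and the right-hand side has \<open>N\<close> derivatives by induction\<close>
  define w where "w k x = - (\<Sum>i\<le>k. real (k choose i) * u (Suc i) x * v2 (k - i) x)" for k x
  have "successive_derivs N w S"
    unfolding w_def v2_def
    by (intro successive_derivs_minus successive_derivs_mult v(1)
              successive_derivs_Suc_shift[OF assms(1)])
  moreover have "((\<lambda>x. 1 / u 0 x) has_real_derivative w 0 x) (at x)" if x: "x \<in> S" for x
  proof -
    have "(u 0 has_real_derivative u 1 x) (at x)"
      using assms(1)[of 1] x unfolding successive_derivs_def by simp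
    then show ?thesis
      using assms(2)[OF x] v(2) x
      by (auto intro!: derivative_eq_intros simp: w_def v2_def power2_eq_square)
  qed
  ultimately have "successive_derivs (Suc N) (case_nat (\<lambda>x. 1 / u 0 x) w) S"
    by (rule successive_derivs_case_nat)
  then show ?case by auto
qed

section \<open>Bounded functions and the moment--cumulant recursion\<close>

lemma Bfun_eventually_eq:
  assumes "eventually (\<lambda>x. f x = g x) F" "Bfun f F"
  shows "Bfun g F"
proof -
  obtain y K where "0 < K" "eventually (\<lambda>x. dist (f x) y \<le> K) F"
    using assms(2) unfolding Bfun_metric_def by blast
  from assms(1) this(2) have "eventually (\<lambda>x. dist (g x) y \<le> K) F"
    by eventually_elim simp
  with \<open>0 < K\<close> show ?thesis
    unfolding Bfun_metric_def by blast
qed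

lemma Bfun_eventually_const: "eventually (\<lambda>x. f x = c) F \<Longrightarrow> Bfun f F"
  by (rule Bfun_eventually_eq[OF _ Bfun_const]) (auto elim: eventually_mono)

lemma Bfun_add:
  fixes f g :: "'a \<Rightarrow> 'b :: real_normed_vector"
  assumes "Bfun f F" "Bfun g F"
  shows "Bfun (\<lambda>x. f x + g x) F"
proof -
  obtain A B where "eventually (\<lambda>x. norm (f x) \<le> A) F" "eventually (\<lambda>x. norm (g x) \<le> B) F"
    using BfunE[OF assms(1)] BfunE[OF assms(2)] by metis
  then have "eventually (\<lambda>x. norm (f x + g x) \<le> A + B) F"
    by eventually_elim (rule norm_triangle_le, simp)
  then show ?thesis by (rule BfunI)
qed

lemma Bfun_minus:
  fixes f :: "'a \<Rightarrow> 'b :: real_normed_vector"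
  shows "Bfun f F \<Longrightarrow> Bfun (\<lambda>x. - f x) F"
  unfolding Bfun_def by simp

lemma Bfun_mult:
  fixes f g :: "'a \<Rightarrow> 'b :: real_normed_algebra"
  assumes "Bfun f F" "Bfun g F"
  shows "Bfun (\<lambda>x. f x * g x) F"
proof -
  obtain A B where "eventually (\<lambda>x. norm (f x) \<le> A) F" "eventually (\<lambda>x. norm (g x) \<le> B) F"
    using BfunE[OF assms(1)] BfunE[OF assms(2)] by metis
  then have "eventually (\<lambda>x. norm (f x * g x) \<le> A * B) F"
    by eventually_elim (rule order.trans[OF norm_mult_ineq mult_mono], auto intro: order.trans[OF norm_ge_zero])
  then show ?thesis by (rule BfunI)
qed

lemma Bfun_sum:
  fixes f :: "'i \<Rightarrow> 'a \<Rightarrow> 'b :: real_normed_vector"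
  shows "(\<And>i. i \<in> I \<Longrightarrow> Bfun (f i) F) \<Longrightarrow> Bfun (\<lambda>x. \<Sum>i\<in>I. f i x) F"
  by (induction I rule: infinite_finite_induct) (auto intro: Bfun_add)

lemma Bfun_filtermap_iff: "Bfun f (filtermap g F) \<longleftrightarrow> Bfun (\<lambda>x. f (g x)) F"
  by (simp add: Bfun_metric_def eventually_filtermap)

lemma Limsup_abs_less_infinity_iff_Bfun:
  fixes f :: "'a \<Rightarrow> real"
  shows "Limsup F (\<lambda>x. ereal \<bar>f x\<bar>) < \<infinity> \<longleftrightarrow> Bfun f F"
proof
  assume "Limsup F (\<lambda>x. ereal \<bar>f x\<bar>) < \<infinity>"
  then obtain B :: nat where "Limsup F (\<lambda>x. ereal \<bar>f x\<bar>) < ereal (real B)"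
    by (auto simp: less_PInf_Ex_of_nat)
  then have "eventually (\<lambda>x. ereal \<bar>f x\<bar> < ereal (real B)) F"
    by (rule Limsup_lessD)
  then have "eventually (\<lambda>x. norm (f x) \<le> real B) F"
    by (rule eventually_mono) simp
  then show "Bfun f F"
    by (rule BfunI)
next
  assume "Bfun f F"
  then obtain B where "eventually (\<lambda>x. norm (f x) \<le> B) F"
    by (rule BfunE)
  then have "eventually (\<lambda>x. ereal \<bar>f x\<bar> \<le> ereal B) F"
    by (rule eventually_mono) simp
  then have "Limsup F (\<lambda>x. ereal \<bar>f x\<bar>) \<le> ereal B"
    by (rule Limsup_bounded)
  then show "Limsup F (\<lambda>x. ereal \<bar>f x\<bar>) < \<infinity>"
    by (rule order.strict_trans1) simp
qed

text \<open>The moment--cumulant recursion of a distribution with mean \<open>0\<close> and variance \<open>1\<close>,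
  moments \<open>c k\<close> and cumulants \<open>\<kappa> j\<close> (the cumulant \<open>\<kappa> 1 = 0\<close> does not occur).\<close>
definition standardized_moment_cumulant_rel ::
    "(nat \<Rightarrow> 'a \<Rightarrow> real) \<Rightarrow> (nat \<Rightarrow> 'a \<Rightarrow> real) \<Rightarrow> 'a \<Rightarrow> bool" where
  "standardized_moment_cumulant_rel c \<kappa> x \<longleftrightarrow> c 0 x = 1 \<and> \<kappa> 2 x = 1 \<and>
     (\<forall>k. c (Suc k) x = (\<Sum>i<k. real (k choose i) * c i x * \<kappa> (Suc (k - i)) x))"

lemma Bfun_moments_if_cumulants:
  assumes rel: "eventually (standardized_moment_cumulant_rel c \<kappa>) F"
    and \<kappa>: "\<forall>j\<in>{3..n}. Bfun (\<kappa> j) F"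
  shows "k \<le> n \<Longrightarrow> Bfun (c k) F"
proof (induction k rule: less_induct)
  case (less k)
  have \<kappa>2: "Bfun (\<kappa> j) F" if "2 \<le> j" "j \<le> n" for j
  proof (cases "j = 2")
    case True
    then show ?thesis
      using rel by (intro Bfun_eventually_const)
                   (auto elim: eventually_mono simp: standardized_moment_cumulant_rel_def)
  qed (use \<kappa> that in auto)
  show ?case
  proof (cases k)
    case 0
    then show ?thesis
      using rel by (intro Bfun_eventually_const)
                   (auto elim: eventually_mono simp: standardized_moment_cumulant_rel_def)
  next
    case (Suc k')
    have "Bfun (\<lambda>x. real (k' choose i) * c i x * \<kappa> (Suc (k' - i)) x) F" if "i < k'" for i
      using that less.prems Suc by (intro Bfun_mult Bfun_const less.IH \<kappa>2) auto
    then have "Bfun (\<lambda>x. \<Sum>i<k'. real (k' choose i) * c i x * \<kappa> (Suc (k' - i)) x) F"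
      by (intro Bfun_sum) simp
    moreover have "eventually (\<lambda>x. (\<Sum>i<k'. real (k' choose i) * c i x * \<kappa> (Suc (k' - i)) x) = c k x) F"
      using rel by (auto elim: eventually_mono simp: standardized_moment_cumulant_rel_def Suc)
    ultimately show ?thesis
      by (rule Bfun_eventually_eq[rotated])
  qed
qed

lemma Bfun_cumulants_if_moments:
  assumes rel: "eventually (standardized_moment_cumulant_rel c \<kappa>) F"
    and c: "\<forall>k\<in>{3..n}. Bfun (c k) F"
  shows "2 \<le> j \<Longrightarrow> j \<le> n \<Longrightarrow> Bfun (\<kappa> j) F"
proof (induction j rule: less_induct)
  case (less j)
  have "eventually (\<lambda>x. c 0 x = 1) F" "eventually (\<lambda>x. c 1 x = 0) F" "eventually (\<lambda>x. c 2 x = 1) F"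
    using rel by (auto elim!: eventually_mono simp: standardized_moment_cumulant_rel_def numeral_2_eq_2)
  then have c_low: "Bfun (c k) F" if "k < 3" for k
    using that by (auto simp: less_Suc_eq numeral_3_eq_3 numeral_2_eq_2 intro: Bfun_eventually_const)
  have c': "Bfun (c k) F" if "k \<le> n" for k
    using c c_low that by (cases "k < 3") auto
  show ?case
  proof (cases "j = 2")
    case True
    then show ?thesis
      using rel by (intro Bfun_eventually_const)
                   (auto elim: eventually_mono simp: standardized_moment_cumulant_rel_def)
  next
    case False
    define k where "k = j - 2"
    have k: "j = Suc (Suc k)" "1 \<le> k"
      using less.prems False by (auto simp: k_def)
    \<comment> \<open>the \<open>i = 0\<close> term of the recursion for \<open>c j\<close> is \<open>\<kappa> j\<close>, all others involve lower cumulants\<close>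
    let ?rest = "\<lambda>x. \<Sum>i<k. real (Suc k choose Suc i) * c (Suc i) x * \<kappa> (Suc (k - i)) x"
    have "Bfun (\<lambda>x. real (Suc k choose Suc i) * c (Suc i) x * \<kappa> (Suc (k - i)) x) F" if "i < k" for i
      using that less.prems k by (intro Bfun_mult Bfun_const c' less.IH) auto
    then have "Bfun ?rest F"
      by (intro Bfun_sum) simp
    then have "Bfun (\<lambda>x. c j x + - ?rest x) F"
      using c' less.prems by (intro Bfun_add Bfun_minus) auto
    moreover have "eventually (\<lambda>x. c j x + - ?rest x = \<kappa> j x) F"
      using rel
    proof (rule eventually_mono)
      fix x assume "standardized_moment_cumulant_rel c \<kappa> x"
      then have "c 0 x = 1"
        and "c j x = (\<Sum>i<Suc k. real (Suc k choose i) * c i x * \<kappa> (Suc (Suc k - i)) x)"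
        unfolding standardized_moment_cumulant_rel_def k by blast+
      then show "c j x + - ?rest x = \<kappa> j x"
        by (simp only: sum.lessThan_Suc_shift) (simp add: k)
    qed
    ultimately show ?thesis
      by (rule Bfun_eventually_eq[rotated])
  qed
qed

lemma Bfun_cumulants_iff_moments:
  assumes "eventually (standardized_moment_cumulant_rel c \<kappa>) F"
  shows "(\<forall>j\<in>{3..n}. Bfun (\<kappa> j) F) \<longleftrightarrow> (\<forall>k\<in>{3..n}. Bfun (c k) F)"
  using Bfun_moments_if_cumulants[OF assms] Bfun_cumulants_if_moments[OF assms] by auto

section \<open>Shifted moment sums of the Khinchin family\<close>

lemma conv_radius_mult_of_nat_ge:
  fixes f :: "nat \<Rightarrow> 'a :: {banach, real_normed_field}"
  shows "conv_radius f \<le> conv_radius (\<lambda>n. of_nat n * f n)"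
proof -
  have "conv_radius f \<le> conv_radius (diffs f)"
  proof (rule conv_radius_geI_ex')
    fix r :: real assume r: "0 < r" "ereal r < conv_radius f"
    obtain K where K: "r < K" "ereal K < conv_radius f"
      using ereal_dense2[OF r(2)] by (metis less_ereal.simps(1))
    show "summable (\<lambda>n. diffs f n * of_real r ^ n)"
    proof (rule termdiff_converges[of _ K])
      fix z :: 'a assume "norm z < K"
      then show "summable (\<lambda>n. f n * z ^ n)"
        by (intro summable_in_conv_radius order.strict_trans[OF _ K(2)]) simp
    qed (use r K in simp)
  qed
  also have "conv_radius (diffs f) = conv_radius (\<lambda>n. of_nat n * f n)"
    using conv_radius_shift[of "\<lambda>n. of_nat n * f n" 1] by (simp add: diffs_def)
  finally show ?thesis .
qed

lemma conv_radius_mult_shifted_power_ge: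
  fixes f :: "nat \<Rightarrow> 'a :: {banach, real_normed_field}"
  shows "conv_radius f \<le> conv_radius (\<lambda>n. (of_nat n - m) ^ k * f n)"
proof (induction k)
  case (Suc k)
  define g where "g n = (of_nat n - m) ^ k * f n" for n
  have "conv_radius g \<le> conv_radius (\<lambda>n. - m * g n)"
    using conv_radius_cmult_left[of "- m" g] by (cases "m = 0") simp_all
  then have "conv_radius g \<le> min (conv_radius (\<lambda>n. of_nat n * g n)) (conv_radius (\<lambda>n. - m * g n))"
    using conv_radius_mult_of_nat_ge[of g] by simp
  also have "\<dots> \<le> conv_radius (\<lambda>n. of_nat n * g n + - m * g n)"
    by (rule conv_radius_add_ge)
  finally show ?case
    using Suc by (simp add: g_def algebra_simps)
qed simp

lemma has_real_derivative_powser_exp: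
  fixes c :: "nat \<Rightarrow> real"
  assumes "ereal (exp s) < conv_radius c"
  shows "((\<lambda>s. \<Sum>n. c n * exp s ^ n) has_real_derivative (\<Sum>n. real n * c n * exp s ^ n)) (at s)"
proof -
  obtain K where K: "exp s < K" "ereal K < conv_radius c"
    using ereal_dense2[OF assms] by (metis less_ereal.simps(1))
  have sm: "summable (\<lambda>n. c n * z ^ n)" if "norm z < K" for z
    using that by (intro summable_in_conv_radius order.strict_trans[OF _ K(2)]) simp
  have t: "norm (exp s) < K" using K by simp
  have "(\<lambda>n. real n * c n * exp s ^ (n - 1) * exp s) sums ((\<Sum>n. diffs c n * exp s ^ n) * exp s)"
    using diffs_equiv[OF termdiff_converges[OF t sm]] by (intro sums_mult2) simp
  moreover have shift: "real n * c n * exp s ^ (n - 1) * exp s = real n * c n * exp s ^ n" for n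
    by (cases n) simp_all
  ultimately have "(\<lambda>n. real n * c n * exp s ^ n) sums ((\<Sum>n. diffs c n * exp s ^ n) * exp s)"
    by (simp only: shift)
  then have D: "(\<Sum>n. diffs c n * exp s ^ n) * exp s = (\<Sum>n. real n * c n * exp s ^ n)"
    by (simp add: sums_iff)
  have "((\<lambda>z. \<Sum>n. c n * z ^ n) has_real_derivative (\<Sum>n. diffs c n * exp s ^ n)) (at (exp s))"
    by (rule termdiffs_strong'[OF sm t])
  from DERIV_chain2[OF this DERIV_exp] show ?thesis
    unfolding D by simp
qed

definition fulcrum_dom :: "(nat \<Rightarrow> real) \<Rightarrow> real set" where
  "fulcrum_dom a = {s. ereal (exp s) < conv_radius a}"

lemma open_fulcrum_dom: "open (fulcrum_dom a)"
  unfolding fulcrum_dom_def by (intro open_Collect_less continuous_intros)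

text \<open>With \<open>t = exp s\<close>, \<open>moment_sum a m k s = f(t) exp(- m s) E((X\<^sub>t - m)\<^sup>k)\<close>; the factor
  \<open>exp(- m s)\<close> is what makes differentiation in \<open>s\<close> raise \<open>k\<close> by one.\<close>
definition moment_sum :: "(nat \<Rightarrow> real) \<Rightarrow> real \<Rightarrow> nat \<Rightarrow> real \<Rightarrow> real" where
  "moment_sum a m k s = (\<Sum>n. (real n - m) ^ k * a n * exp s ^ n) * exp (- m * s)"

lemma summable_moment_sum:
  assumes "s \<in> fulcrum_dom a"
  shows "summable (\<lambda>n. (real n - m) ^ k * a n * exp s ^ n)"
proof (rule summable_in_conv_radius)
  show "ereal (norm (exp s)) < conv_radius (\<lambda>n. (real n - m) ^ k * a n)"
    using assms conv_radius_mult_shifted_power_ge[of a m k] by (simp add: fulcrum_dom_def)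
qed

lemma has_real_derivative_moment_sum:
  assumes "s \<in> fulcrum_dom a"
  shows "(moment_sum a m k has_real_derivative moment_sum a m (Suc k) s) (at s)"
proof -
  define c where "c n = (real n - m) ^ k * a n" for n
  have c: "ereal (exp s) < conv_radius c"
    using assms conv_radius_mult_shifted_power_ge[of a m k] by (simp add: fulcrum_dom_def c_def)
  then have "ereal (norm (exp s)) < conv_radius (\<lambda>n. real n * c n)"
    using conv_radius_mult_of_nat_ge[of c] by simp
  then have sm: "summable (\<lambda>n. c n * exp s ^ n)" "summable (\<lambda>n. real n * c n * exp s ^ n)"
    using c by (auto intro!: summable_in_conv_radius)
  note D = has_real_derivative_powser_exp[OF c]
  have "(\<Sum>n. (real n - m) ^ Suc k * a n * exp s ^ n)
      = (\<Sum>n. real n * c n * exp s ^ n - m * (c n * exp s ^ n))"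
    by (simp add: c_def algebra_simps)
  also have "\<dots> = (\<Sum>n. real n * c n * exp s ^ n) - m * (\<Sum>n. c n * exp s ^ n)"
    using suminf_diff[OF sm(2) summable_mult[OF sm(1), of m]] suminf_mult[OF sm(1), of m] by simp
  finally have E: "(\<Sum>n. (real n - m) ^ Suc k * a n * exp s ^ n)
      = (\<Sum>n. real n * c n * exp s ^ n) - m * (\<Sum>n. c n * exp s ^ n)" .
  have "moment_sum a m (Suc k) s
      = (\<Sum>n. real n * c n * exp s ^ n) * exp (- m * s)
        + (\<Sum>n. c n * exp s ^ n) * (exp (- m * s) * - m)"
    unfolding moment_sum_def E by (simp add: algebra_simps)
  moreover have "moment_sum a m k = (\<lambda>s. (\<Sum>n. c n * exp s ^ n) * exp (- m * s))"
    by (simp add: moment_sum_def c_def fun_eq_iff)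
  ultimately show ?thesis
    using D by (auto intro!: derivative_eq_intros)
qed

lemma successive_derivs_moment_sum: "successive_derivs N (moment_sum a m) (fulcrum_dom a)"
  unfolding successive_derivs_def using has_real_derivative_moment_sum by blast

lemma moment_sum_pos:
  assumes "inK a" "s \<in> fulcrum_dom a" "even k"
  shows "0 < moment_sum a m k s"
proof -
  obtain i where i: "0 < a i" "k = 0 \<or> real i \<noteq> m"
  proof (cases "k = 0 \<or> m \<noteq> 0")
    case True
    then show ?thesis using assms(1) that[of 0] by (auto simp: inK_def)
  next
    case False
    obtain n where "n > 0" "a n \<noteq> 0" using assms(1) by (auto simp: inK_def)
    then show ?thesis
      using False assms(1) that[of n] by (auto simp: inK_def order_le_less)
  qed
  have "0 < (\<Sum>n. (real n - m) ^ k * a n * exp s ^ n)"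
  proof (rule suminf_pos2[OF summable_moment_sum[OF assms(2)]])
    show "0 \<le> (real n - m) ^ k * a n * exp s ^ n" for n
      using assms(1,3) by (simp add: inK_def zero_le_even_power)
    show "0 < (real i - m) ^ k * a i * exp s ^ i"
      using i assms(3) by (auto simp: zero_less_power_eq)
  qed
  then show ?thesis by (simp add: moment_sum_def)
qed

lemma kexp_power_eq_moment_sum:
  assumes "s \<in> fulcrum_dom a"
  shows "kexp a (exp s) (\<lambda>n. (real n - m) ^ k) = moment_sum a m k s / moment_sum a m 0 s"
proof -
  have "kexp a (exp s) (\<lambda>n. (real n - m) ^ k)
      = (\<Sum>n. (real n - m) ^ k * a n * exp s ^ n / pfun a (exp s))"
    by (simp add: kexp_def kprob_def mult.assoc)
  also have "\<dots> = (\<Sum>n. (real n - m) ^ k * a n * exp s ^ n) / pfun a (exp s)"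
    by (rule suminf_divide[OF summable_moment_sum[OF assms]])
  also have "\<dots> = moment_sum a m k s / moment_sum a m 0 s"
    by (simp add: moment_sum_def pfun_def)
  finally show ?thesis .
qed

lemma summable_kprob_power:
  assumes "s \<in> fulcrum_dom a"
  shows "summable (\<lambda>n. (real n - m) ^ k * kprob a (exp s) n)"
  using summable_divide[OF summable_moment_sum[OF assms], of m k "pfun a (exp s)"]
  by (simp add: kprob_def mult.assoc)

lemma fulcrum_eq_ln_moment_sum: "fulcrum a s = ln (moment_sum a 0 0 s)"
  by (simp add: fulcrum_def pfun_def moment_sum_def)

lemma deriv_fulcrum:
  assumes "inK a" "s \<in> fulcrum_dom a"
  shows "deriv (fulcrum a) s = moment_sum a 0 1 s / moment_sum a 0 0 s"
proof (rule DERIV_imp_deriv)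
  show "(fulcrum a has_real_derivative moment_sum a 0 1 s / moment_sum a 0 0 s) (at s)"
    unfolding fulcrum_eq_ln_moment_sum[abs_def]
    using has_real_derivative_moment_sum[OF assms(2), of 0 0] moment_sum_pos[OF assms, of 0 0]
    by (auto intro!: derivative_eq_intros)
qed

lemma kmean_exp_eq_deriv_fulcrum:
  assumes "inK a" "s \<in> fulcrum_dom a"
  shows "kmean a (exp s) = deriv (fulcrum a) s"
  using kexp_power_eq_moment_sum[OF assms(2), of 0 1] deriv_fulcrum[OF assms]
  by (simp add: kmean_def)

lemma successive_derivs_deriv_fulcrum:
  assumes "inK a"
  shows "\<exists>w. successive_derivs N w (fulcrum_dom a) \<and>
             (\<forall>s\<in>fulcrum_dom a. w 0 s = deriv (fulcrum a) s)"
proof -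
  obtain r where r: "successive_derivs N r (fulcrum_dom a)"
    "\<forall>s\<in>fulcrum_dom a. r 0 s = 1 / moment_sum a 0 0 s"
    using successive_derivs_inverse[where u = "moment_sum a 0" and S = "fulcrum_dom a" and N = N]
          successive_derivs_moment_sum
          moment_sum_pos[OF assms, of _ 0 0] by fastforce
  define w where "w k s = (\<Sum>i\<le>k. real (k choose i) * moment_sum a 0 (Suc i) s * r (k - i) s)" for k s
  have "successive_derivs N w (fulcrum_dom a)"
    unfolding w_def
    by (intro successive_derivs_mult r(1) successive_derivs_Suc_shift successive_derivs_moment_sum)
  moreover have "w 0 s = deriv (fulcrum a) s" if "s \<in> fulcrum_dom a" for s
    using that r(2) deriv_fulcrum[OF assms that] by (simp add: w_def)
  ultimately show ?thesis by blast
qed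

lemma moment_sum_1:
  assumes "inK a" "s \<in> fulcrum_dom a"
  shows "moment_sum a m 1 s = moment_sum a m 0 s * (deriv (fulcrum a) s - m)"
proof -
  let ?S = "\<lambda>k. \<Sum>n. (real n - 0) ^ k * a n * exp s ^ n"
  have E: "(\<Sum>n. (real n - m) ^ 1 * a n * exp s ^ n) = ?S 1 - m * ?S 0"
    using suminf_diff[OF summable_moment_sum[OF assms(2), of 0 1]
                         summable_mult[OF summable_moment_sum[OF assms(2), of 0 0], of m]]
          suminf_mult[OF summable_moment_sum[OF assms(2), of 0 0], of m]
    by (simp add: algebra_simps)
  have "?S 0 > 0"
    using moment_sum_pos[OF assms, of 0 0] by (simp add: moment_sum_def)
  then show ?thesis
    unfolding deriv_fulcrum[OF assms] moment_sum_def E by (simp add: field_simps)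
qed

lemma moment_sum_Suc_at_mean:
  assumes "inK a" "x \<in> fulcrum_dom a"
  defines "m \<equiv> deriv (fulcrum a) x"
  shows "moment_sum a m (Suc k) x
       = (\<Sum>i<k. real (k choose i) * moment_sum a m i x * (deriv ^^ Suc (k - i)) (fulcrum a) x)"
proof -
  obtain w where w: "successive_derivs k w (fulcrum_dom a)"
    "\<forall>s\<in>fulcrum_dom a. w 0 s = deriv (fulcrum a) s"
    using successive_derivs_deriv_fulcrum[OF assms(1)] by blast
  have higher_fulcrum: "(deriv ^^ Suc j) (fulcrum a) x = w j x" if "j \<le> k" for j
    using higher_deriv_eq_successive_derivs[OF open_fulcrum_dom w(1), of "deriv (fulcrum a)"]
          w(2) that assms(2)
    by (simp add: funpow_Suc_right del: funpow.simps)
  define h where "h j s = w j s - (if j = 0 then m else 0)" for j s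
  have "successive_derivs k h (fulcrum_dom a)"
    using w(1) unfolding successive_derivs_def h_def by (auto intro!: derivative_eq_intros)
  then have P: "successive_derivs k
      (\<lambda>j s. \<Sum>i\<le>j. real (j choose i) * moment_sum a m i s * h (j - i) s) (fulcrum_dom a)"
    by (intro successive_derivs_mult successive_derivs_moment_sum)
  \<comment> \<open>Leibniz rule applied to \<open>moment_sum a m 1 = moment_sum a m 0 * (F' - m)\<close>\<close>
  have "moment_sum a m (Suc k) x = (deriv ^^ k) (moment_sum a m 1) x"
    using higher_deriv_eq_successive_derivs[OF open_fulcrum_dom
            successive_derivs_Suc_shift[OF successive_derivs_moment_sum[where N = "Suc k"]],
            where f = "moment_sum a m 1" and k = k] assms(2)
    by simp
  also have "\<dots> = (\<Sum>i\<le>k. real (k choose i) * moment_sum a m i x * h (k - i) x)"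
    using higher_deriv_eq_successive_derivs[OF open_fulcrum_dom P] assms(2) moment_sum_1[OF assms(1)] w(2)
    by (simp add: h_def)
  also have "\<dots> = (\<Sum>i<k. real (k choose i) * moment_sum a m i x * w (k - i) x)"
    using w(2) assms(2) by (simp add: lessThan_Suc_atMost[symmetric] h_def m_def)
  also have "\<dots> = (\<Sum>i<k. real (k choose i) * moment_sum a m i x * (deriv ^^ Suc (k - i)) (fulcrum a) x)"
    by (intro sum.cong refl) (simp add: higher_fulcrum del: funpow.simps)
  finally show ?thesis .
qed

definition central_moment :: "(nat \<Rightarrow> real) \<Rightarrow> nat \<Rightarrow> real \<Rightarrow> real" where
  "central_moment a k t = kexp a t (\<lambda>n. (real n - kmean a t) ^ k)"

lemma central_moment_exp:
  assumes "inK a" "s \<in> fulcrum_dom a"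
  shows "central_moment a k (exp s)
       = moment_sum a (deriv (fulcrum a) s) k s / moment_sum a (deriv (fulcrum a) s) 0 s"
  unfolding central_moment_def kmean_exp_eq_deriv_fulcrum[OF assms]
  by (rule kexp_power_eq_moment_sum[OF assms(2)])

lemma central_moment_Suc:
  assumes "inK a" "s \<in> fulcrum_dom a"
  shows "central_moment a (Suc k) (exp s)
       = (\<Sum>i<k. real (k choose i) * central_moment a i (exp s) * (deriv ^^ Suc (k - i)) (fulcrum a) s)"
  unfolding central_moment_exp[OF assms] moment_sum_Suc_at_mean[OF assms]
  by (simp add: sum_divide_distrib)

lemma central_moment_0:
  assumes "inK a" "s \<in> fulcrum_dom a"
  shows "central_moment a 0 (exp s) = 1"
  using moment_sum_pos[OF assms, where k = 0 and m = "deriv (fulcrum a) s"]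
  by (simp add: central_moment_exp[OF assms])

lemma central_moment_2:
  assumes "inK a" "s \<in> fulcrum_dom a"
  shows "central_moment a 2 (exp s) = (deriv ^^ 2) (fulcrum a) s"
  using central_moment_Suc[OF assms, of 1] central_moment_0[OF assms]
  by (simp add: numeral_2_eq_2)

lemma central_moment_2_pos:
  assumes "inK a" "s \<in> fulcrum_dom a"
  shows "0 < central_moment a 2 (exp s)"
  using moment_sum_pos[OF assms, where k = 0 and m = "deriv (fulcrum a) s"]
        moment_sum_pos[OF assms, where k = 2 and m = "deriv (fulcrum a) s"]
  by (simp add: central_moment_exp[OF assms])

lemma knormmoment_eq_central_moment:
  assumes "s \<in> fulcrum_dom a"
  shows "knormmoment a k (exp s) = central_moment a k (exp s) / sqrt (central_moment a 2 (exp s)) ^ k"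
proof -
  define \<sigma> where "\<sigma> = sqrt (central_moment a 2 (exp s))"
  have "knormmoment a k (exp s)
      = (\<Sum>n. (real n - kmean a (exp s)) ^ k * kprob a (exp s) n / \<sigma> ^ k)"
    by (simp add: knormmoment_def kexp_def ksigma_def kvar_def central_moment_def \<sigma>_def power_divide)
  also have "\<dots> = central_moment a k (exp s) / \<sigma> ^ k"
    unfolding central_moment_def kexp_def by (rule suminf_divide[OF summable_kprob_power[OF assms]])
  finally show ?thesis by (simp add: \<sigma>_def)
qed

text \<open>\<open>(deriv ^^ j) (fulcrum a) s\<close> is the \<open>j\<close>-th cumulant of \<open>X\<^sub>t\<close>, \<open>t = exp s\<close>.\<close>
definition standardized_cumulant :: "(nat \<Rightarrow> real) \<Rightarrow> nat \<Rightarrow> real \<Rightarrow> real" where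
  "standardized_cumulant a j s = (deriv ^^ j) (fulcrum a) s / (deriv ^^ 2) (fulcrum a) s powr (real j / 2)"

lemma powr_half_eq_sqrt_power: "0 < (c :: real) \<Longrightarrow> c powr (real j / 2) = sqrt c ^ j"
  by (simp add: powr_half_sqrt[symmetric] powr_realpow[symmetric] powr_powr)

lemma standardized_cumulant_2:
  assumes "inK a" "s \<in> fulcrum_dom a"
  shows "standardized_cumulant a 2 s = 1"
  using central_moment_2_pos[OF assms] by (simp add: standardized_cumulant_def central_moment_2[OF assms])

lemma knormmoment_0:
  assumes "inK a" "s \<in> fulcrum_dom a"
  shows "knormmoment a 0 (exp s) = 1"
  by (simp add: knormmoment_eq_central_moment[OF assms(2)] central_moment_0[OF assms])

lemma knormmoment_Suc:
  assumes "inK a" "s \<in> fulcrum_dom a"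
  shows "knormmoment a (Suc k) (exp s)
       = (\<Sum>i<k. real (k choose i) * knormmoment a i (exp s) * standardized_cumulant a (Suc (k - i)) s)"
proof -
  define \<sigma> where "\<sigma> = sqrt (central_moment a 2 (exp s))"
  have \<sigma>: "0 < \<sigma>" using central_moment_2_pos[OF assms] by (simp add: \<sigma>_def)
  have cumulant: "standardized_cumulant a j s = (deriv ^^ j) (fulcrum a) s / \<sigma> ^ j" for j
    using central_moment_2_pos[OF assms]
    by (simp add: standardized_cumulant_def \<sigma>_def central_moment_2[OF assms] powr_half_eq_sqrt_power)
  have "knormmoment a (Suc k) (exp s)
      = (\<Sum>i<k. real (k choose i) * central_moment a i (exp s) * (deriv ^^ Suc (k - i)) (fulcrum a) s)
        / \<sigma> ^ Suc k"
    by (simp add: knormmoment_eq_central_moment[OF assms(2)] central_moment_Suc[OF assms] \<sigma>_def)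
  also have "\<dots> = (\<Sum>i<k. real (k choose i) * (central_moment a i (exp s) / \<sigma> ^ i)
                        * ((deriv ^^ Suc (k - i)) (fulcrum a) s / \<sigma> ^ Suc (k - i)))"
    unfolding sum_divide_distrib
  proof (intro sum.cong refl)
    fix i assume "i \<in> {..<k}"
    then have "\<sigma> ^ Suc k = \<sigma> ^ i * \<sigma> ^ Suc (k - i)"
      by (simp add: power_add[symmetric])
    then show "real (k choose i) * central_moment a i (exp s) * (deriv ^^ Suc (k - i)) (fulcrum a) s
                 / \<sigma> ^ Suc k
             = real (k choose i) * (central_moment a i (exp s) / \<sigma> ^ i)
                 * ((deriv ^^ Suc (k - i)) (fulcrum a) s / \<sigma> ^ Suc (k - i))"
      using \<sigma> by (simp del: funpow.simps power.simps)
  qed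
  also have "\<dots> = (\<Sum>i<k. real (k choose i) * knormmoment a i (exp s)
                         * standardized_cumulant a (Suc (k - i)) s)"
    by (simp add: knormmoment_eq_central_moment[OF assms(2)] cumulant \<sigma>_def del: funpow.simps)
  finally show ?thesis .
qed

section \<open>Passing from \<open>t\<close> to \<open>s = ln t\<close>\<close>

lemma filtermap_exp_at_left_ln:
  fixes R :: real
  assumes "0 < R"
  shows "filtermap exp (at_left (ln R)) = at_left R"
proof (rule filtermap_fun_inverse[where g = ln])
  have exp_less: "exp x < R \<longleftrightarrow> x < ln R" for x
    using exp_less_cancel_iff[of x "ln R"] assms by simp
  have "eventually (\<lambda>x. x \<in> {0<..<R}) (at_left R)"
    using assms by (intro eventually_at_left_real) simp
  then show "eventually (\<lambda>x. exp (ln x) = x) (at_left R)"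
    and "filterlim ln (at_left (ln R)) (at_left R)"
    using assms
    by (auto elim!: eventually_mono intro!: tendsto_imp_filterlim_at_left tendsto_eq_intros)
  have "eventually (\<lambda>x. x < ln R) (at_left (ln R))"
    by (simp add: eventually_at_filter)
  then show "filterlim exp (at_left R) (at_left (ln R))"
    using assms
    by (auto simp: exp_less elim!: eventually_mono intro!: tendsto_imp_filterlim_at_left tendsto_eq_intros)
qed

lemma inK_conv_radius_cases:
  assumes "inK a"
  obtains "conv_radius a = \<infinity>" | R where "conv_radius a = ereal R" "0 < R"
  using assms by (cases "conv_radius a") (auto simp: inK_def)

lemma filtermap_exp_to_lnR:
  assumes "inK a"
  shows "filtermap exp (to_lnR a) = to_R a"
  using assms
  by (cases rule: inK_conv_radius_cases)
     (simp_all add: to_R_def to_lnR_def filtermap_exp_at_top filtermap_exp_at_left_ln)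

lemma eventually_fulcrum_dom:
  assumes "inK a"
  shows "eventually (\<lambda>s. s \<in> fulcrum_dom a) (to_lnR a)"
  using assms
proof (cases rule: inK_conv_radius_cases)
  case (2 R)
  have "eventually (\<lambda>s. s < ln R) (at_left (ln R))"
    by (simp add: eventually_at_filter)
  moreover have "exp s < R \<longleftrightarrow> s < ln R" for s
    using exp_less_cancel_iff[of s "ln R"] 2 by simp
  ultimately show ?thesis
    using 2 by (auto simp: to_lnR_def fulcrum_dom_def elim!: eventually_mono)
qed (simp add: to_lnR_def fulcrum_dom_def)

lemma eventually_standardized_moment_cumulant_rel:
  assumes "inK a"
  shows "eventually (standardized_moment_cumulant_rel
           (\<lambda>k s. knormmoment a k (exp s)) (standardized_cumulant a)) (to_lnR a)"
  using eventually_fulcrum_dom[OF assms]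
proof (rule eventually_mono)
  fix s assume s: "s \<in> fulcrum_dom a"
  show "standardized_moment_cumulant_rel
          (\<lambda>k s. knormmoment a k (exp s)) (standardized_cumulant a) s"
    unfolding standardized_moment_cumulant_rel_def
    by (intro conjI allI knormmoment_0[OF assms s] standardized_cumulant_2[OF assms s]
              knormmoment_Suc[OF assms s])
qed

theorem lemma3p2:
  fixes a :: "nat \<Rightarrow> real" and n :: nat
  assumes "inK a" and "n \<ge> 3"
  shows "(\<forall>j\<in>{3..n}. Limsup (to_lnR a)
            (\<lambda>s. ereal (\<bar>(deriv ^^ j) (fulcrum a) s\<bar> /
                         ((deriv ^^ 2) (fulcrum a) s) powr (real j / 2))) < \<infinity>)
         \<longleftrightarrow> (\<forall>k\<in>{3..n}. Limsup (to_R a) (\<lambda>t. ereal \<bar>knormmoment a k t\<bar>) < \<infinity>)"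
proof -
  have abs_cumulant: "\<bar>(deriv ^^ j) (fulcrum a) s\<bar> / ((deriv ^^ 2) (fulcrum a) s) powr (real j / 2)
      = \<bar>standardized_cumulant a j s\<bar>" for j s
    by (simp add: standardized_cumulant_def abs_divide)
  have cumulants: "Limsup (to_lnR a)
      (\<lambda>s. ereal (\<bar>(deriv ^^ j) (fulcrum a) s\<bar> / ((deriv ^^ 2) (fulcrum a) s) powr (real j / 2))) < \<infinity>
      \<longleftrightarrow> Bfun (standardized_cumulant a j) (to_lnR a)" for j
    unfolding abs_cumulant by (rule Limsup_abs_less_infinity_iff_Bfun)
  have moments: "Limsup (to_R a) (\<lambda>t. ereal \<bar>knormmoment a k t\<bar>) < \<infinity>
      \<longleftrightarrow> Bfun (\<lambda>s. knormmoment a k (exp s)) (to_lnR a)" for k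
    unfolding Limsup_abs_less_infinity_iff_Bfun filtermap_exp_to_lnR[OF assms(1), symmetric]
    by (rule Bfun_filtermap_iff)
  show ?thesis
    unfolding cumulants moments
    by (rule Bfun_cumulants_iff_moments[OF eventually_standardized_moment_cumulant_rel[OF assms(1)]])
qed

end
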